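(* Let $X$ be a topological space, $\mathcal{D}$ the set of dense open subsets of $X$, and $\mathcal{D}'$ an admissible set of domains on $X$ with $\mathcal{D}'\subseteq\mathcal{D}$. Then the inclusion $\bigcup_{A\in\mathcal{D}'}\mathscr{C}(A)\to\bigcup_{A\in\mathcal{D}}\mathscr{C}(A)$, $f\mapsto f$, descends to a well-defined positive ring morphism $\check\iota\colon\mathscr{C}_\approx(\mathcal{D}')\to\mathscr{C}_\approx(\mathcal{D})=\mathscr{C}_{\mathrm{a.e.}}(X)$, and $\check\iota$ is an order embedding.
   Context: An admissible set of domains on $X$ is a set $\mathcal{E}$ of open subsets of $X$ with $X\in\mathcal{E}$ and $A\cap B\in\mathcal{E}$ for all $A,B\in\mathcal{E}$ (the dense open subsets form one). For such $\mathcal{E}$: on $\bigcup_{A\in\mathcal{E}}\mathscr{C}(A)$ ($\mathscr{C}(A)$ = continuous real functions on $A$) define $f+g$, $fg$ pointwise on $\operatorname{dom}f\cap\operatorname{dom}g$; $f\approx g$ iff $f|_A=g|_A$ for some $A\in\mathcal{E}$, $A\subseteq\operatorname{dom}f\cap\operatorname{dom}g$; $\mathscr{C}_\approx(\mathcal{E})$ is the quotient commutative ring, partially ordered by $[f]\le[g]$ iff $f|_A\le g|_A$ pointwise for some $A\in\mathcal{E}$, $A\subseteq\operatorname{dom}f\cap\operatorname{dom}g$. $\mathscr{C}_{\mathrm{a.e.}}(X)=\mathscr{C}_\approx(\mathcal{D})$ for $\mathcal{D}$ the dense open subsets. A ring morphism $\Phi\colon R\to S$ of partially ordered rings is positive if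 $\Phi(R^+)\subseteq S^+$, an order embedding if in addition $\Phi^{-1}(S^+)\subseteq R^+$. *)

theory Defs
  imports "HOL-Analysis.Analysis" "HOL-Algebra.Ring" "HOL-Algebra.RingHom"
begin

text \<open>A partial continuous real function on X is represented as a pair (A, f) with A its domain
  and f continuous on A (as a subspace of X); f is taken extensional (undefined outside A).\<close>

type_synonym 'a pfun = "'a set \<times> ('a \<Rightarrow> real)"

definition admissible_domains :: "'a topology \<Rightarrow> 'a set set \<Rightarrow> bool" where
  "admissible_domains X E \<longleftrightarrow> (\<forall>A\<in>E. openin X A) \<and> topspace X \<in> E \<and>
     (\<forall>A\<in>E. \<forall>B\<in>E. A \<inter> B \<in> E)"

definition dense_opens :: "'a topology \<Rightarrow> 'a set set" where
  "dense_opens X = {A. openin X A \<and> X closure_of A = topspace X}"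

definition pfuns :: "'a topology \<Rightarrow> 'a set set \<Rightarrow> 'a pfun set" where
  "pfuns X E = {(A, f). A \<in> E \<and> continuous_map (subtopology X A) euclideanreal f \<and> f \<in> extensional A}"

definition padd :: "'a pfun \<Rightarrow> 'a pfun \<Rightarrow> 'a pfun" where
  "padd p q = (fst p \<inter> fst q, restrict (\<lambda>x. snd p x + snd q x) (fst p \<inter> fst q))"

definition pmult :: "'a pfun \<Rightarrow> 'a pfun \<Rightarrow> 'a pfun" where
  "pmult p q = (fst p \<inter> fst q, restrict (\<lambda>x. snd p x * snd q x) (fst p \<inter> fst q))"

definition pconst :: "'a topology \<Rightarrow> real \<Rightarrow> 'a pfun" where
  "pconst X c = (topspace X, restrict (\<lambda>x. c) (topspace X))"

definition paeq :: "'a set set \<Rightarrow> 'a pfun \<Rightarrow> 'a pfun \<Rightarrow> bool" where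
  "paeq E p q \<longleftrightarrow> (\<exists>C\<in>E. C \<subseteq> fst p \<inter> fst q \<and> (\<forall>x\<in>C. snd p x = snd q x))"

definition ple :: "'a set set \<Rightarrow> 'a pfun \<Rightarrow> 'a pfun \<Rightarrow> bool" where
  "ple E p q \<longleftrightarrow> (\<exists>C\<in>E. C \<subseteq> fst p \<inter> fst q \<and> (\<forall>x\<in>C. snd p x \<le> snd q x))"

definition paeq_rel :: "'a topology \<Rightarrow> 'a set set \<Rightarrow> ('a pfun \<times> 'a pfun) set" where
  "paeq_rel X E = {(p, q). p \<in> pfuns X E \<and> q \<in> pfuns X E \<and> paeq E p q}"

definition pclass :: "'a topology \<Rightarrow> 'a set set \<Rightarrow> 'a pfun \<Rightarrow> 'a pfun set" where
  "pclass X E p = paeq_rel X E `` {p}"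

definition cadd :: "'a topology \<Rightarrow> 'a set set \<Rightarrow> 'a pfun set \<Rightarrow> 'a pfun set \<Rightarrow> 'a pfun set" where
  "cadd X E P Q = pclass X E (padd (SOME p. p \<in> P) (SOME q. q \<in> Q))"

definition cmult :: "'a topology \<Rightarrow> 'a set set \<Rightarrow> 'a pfun set \<Rightarrow> 'a pfun set \<Rightarrow> 'a pfun set" where
  "cmult X E P Q = pclass X E (pmult (SOME p. p \<in> P) (SOME q. q \<in> Q))"

definition Capprox :: "'a topology \<Rightarrow> 'a set set \<Rightarrow> 'a pfun set ring" where
  "Capprox X E = \<lparr>carrier = pfuns X E // paeq_rel X E,
                   monoid.mult = cmult X E,
                   one = pclass X E (pconst X 1),
                   zero = pclass X E (pconst X 0),
                   add = cadd X E\<rparr>"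

definition cle :: "'a topology \<Rightarrow> 'a set set \<Rightarrow> 'a pfun set \<Rightarrow> 'a pfun set \<Rightarrow> bool" where
  "cle X E P Q \<longleftrightarrow> (\<exists>p\<in>P. \<exists>q\<in>Q. ple E p q)"

definition cpos :: "'a topology \<Rightarrow> 'a set set \<Rightarrow> 'a pfun set set" where
  "cpos X E = {P \<in> carrier (Capprox X E). cle X E (pclass X E (pconst X 0)) P}"

definition iota_check :: "'a topology \<Rightarrow> 'a set set \<Rightarrow> 'a pfun set \<Rightarrow> 'a pfun set" where
  "iota_check X D P = paeq_rel X D `` P"

end

(* Since every domain in D' is dense open, D'-almost equality and D'-almost inequality imply
   their D-counterparts, so the map on classes is well defined, positive, and (as sums and
   products are computed pointwise on intersections of domains) a ring morphism.  Order
   reflection uses that the domains are open: a continuous function that is nonnegative on a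
   dense open subset of its open domain is nonnegative on the whole domain, so its whole domain,
   which lies in D', witnesses positivity in C_approx(D'). *)

theory Submission
  imports Defs
begin

lemma dense_opens_Int:
  assumes "A \<in> dense_opens X" "B \<in> dense_opens X"
  shows "A \<inter> B \<in> dense_opens X"
proof -
  have "openin X A" "X closure_of A = topspace X" "X closure_of B = topspace X"
    using assms by (auto simp: dense_opens_def)
  then have "X closure_of (A \<inter> B) = topspace X"
    by (metis closure_of_openin_Int_superset openin_subset)
  then show ?thesis
    using assms by (auto simp: dense_opens_def)
qed

lemma admissible_dense_opens: "admissible_domains X (dense_opens X)"
  unfolding admissible_domains_def
  by (auto simp: dense_opens_Int) (auto simp: dense_opens_def)

lemma nonneg_on_open_if_nonneg_on_dense:
  assumes f: "continuous_map (subtopology X A) euclideanreal f" and A: "openin X A"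
    and C: "X closure_of C = topspace X" "C \<subseteq> A" "\<forall>x\<in>C. 0 \<le> f x"
  shows "\<forall>x\<in>A. 0 \<le> f x"
proof -
  let ?V = "{x \<in> A. f x < 0}"
  have "openin (subtopology X A) ?V"
    using openin_continuous_map_preimage[OF f, of "{..<0}"] openin_subset[OF A]
    by (simp add: Int_absorb1)
  then have V: "openin X ?V"
    using A openin_open_subtopology by blast
  have "?V \<inter> C = {}"
    using C(3) by force
  then have "?V \<inter> topspace X = {}"
    using openin_Int_closure_of_eq_empty[OF V, of C] C(1) by metis
  then show ?thesis
    using openin_subset[OF A] by force
qed

lemma paeq_mono: "E \<subseteq> E' \<Longrightarrow> paeq E p q \<Longrightarrow> paeq E' p q"
  by (auto simp: paeq_def)

lemma ple_mono: "E \<subseteq> E' \<Longrightarrow> ple E p q \<Longrightarrow> ple E' p q"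
  by (auto simp: ple_def)

lemma pfuns_mono: "E \<subseteq> E' \<Longrightarrow> pfuns X E \<subseteq> pfuns X E'"
  by (auto simp: pfuns_def)

lemma pfuns_fst: "p \<in> pfuns X E \<Longrightarrow> fst p \<in> E"
  by (auto simp: pfuns_def)

lemma paeq_refl: "fst p \<in> E \<Longrightarrow> paeq E p p"
  unfolding paeq_def by blast

lemma paeq_sym: "paeq E p q \<Longrightarrow> paeq E q p"
  unfolding paeq_def by (metis inf_commute)

lemma paeq_trans:
  assumes "admissible_domains X E" "paeq E p q" "paeq E q r"
  shows "paeq E p r"
proof -
  obtain C1 C2 where "C1 \<in> E" "C1 \<subseteq> fst p \<inter> fst q" "\<forall>x\<in>C1. snd p x = snd q x"
    and "C2 \<in> E" "C2 \<subseteq> fst q \<inter> fst r" "\<forall>x\<in>C2. snd q x = snd r x"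
    using assms(2,3) by (auto simp: paeq_def)
  moreover have "C1 \<inter> C2 \<in> E"
    using assms(1) calculation by (simp add: admissible_domains_def)
  ultimately show ?thesis
    unfolding paeq_def by (intro bexI[of _ "C1 \<inter> C2"]) auto
qed

lemma ple_paeq_trans:
  assumes "admissible_domains X E" "paeq E p p'" "ple E p q" "paeq E q q'"
  shows "ple E p' q'"
proof -
  obtain C1 C2 C3 where "C1 \<in> E" "C1 \<subseteq> fst p \<inter> fst p'" "\<forall>x\<in>C1. snd p x = snd p' x"
    and "C2 \<in> E" "C2 \<subseteq> fst p \<inter> fst q" "\<forall>x\<in>C2. snd p x \<le> snd q x"
    and "C3 \<in> E" "C3 \<subseteq> fst q \<inter> fst q'" "\<forall>x\<in>C3. snd q x = snd q' x"
    using assms(2-4) by (auto simp: paeq_def ple_def)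
  moreover have "C1 \<inter> C2 \<inter> C3 \<in> E"
    using assms(1) calculation by (simp add: admissible_domains_def)
  ultimately show ?thesis
    unfolding ple_def by (intro bexI[of _ "C1 \<inter> C2 \<inter> C3"]) force+
qed

lemma equiv_paeq_rel:
  assumes "admissible_domains X E"
  shows "equiv (pfuns X E) (paeq_rel X E)"
proof (rule equivI)
  show "refl_on (pfuns X E) (paeq_rel X E)"
    by (auto intro!: refl_onI paeq_refl pfuns_fst simp: paeq_rel_def)
  show "sym (paeq_rel X E)"
    by (auto intro!: symI paeq_sym simp: paeq_rel_def)
  show "trans (paeq_rel X E)"
    using paeq_trans[OF assms] by (auto intro!: transI simp: paeq_rel_def)
qed (auto simp: paeq_rel_def)

lemma paeq_pointwise:
  assumes "admissible_domains X E" "paeq E p p'" "paeq E q q'"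
  shows "paeq E (fst p \<inter> fst q, restrict (\<lambda>x. h (snd p x) (snd q x)) (fst p \<inter> fst q))
                (fst p' \<inter> fst q', restrict (\<lambda>x. h (snd p' x) (snd q' x)) (fst p' \<inter> fst q'))"
proof -
  obtain C1 C2 where "C1 \<in> E" "C1 \<subseteq> fst p \<inter> fst p'" "\<forall>x\<in>C1. snd p x = snd p' x"
    and "C2 \<in> E" "C2 \<subseteq> fst q \<inter> fst q'" "\<forall>x\<in>C2. snd q x = snd q' x"
    using assms(2,3) by (auto simp: paeq_def)
  moreover have "C1 \<inter> C2 \<in> E"
    using assms(1) calculation by (simp add: admissible_domains_def)
  ultimately show ?thesis
    unfolding paeq_def by (intro bexI[of _ "C1 \<inter> C2"]) auto
qed

lemma pfuns_pointwise:
  fixes X :: "'a topology"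
  assumes "admissible_domains X E" "p \<in> pfuns X E" "q \<in> pfuns X E"
    and h: "\<And>(U :: 'a topology) f g. continuous_map U euclideanreal f \<Longrightarrow> continuous_map U euclideanreal g
              \<Longrightarrow> continuous_map U euclideanreal (\<lambda>x. h (f x) (g x))"
  shows "(fst p \<inter> fst q, restrict (\<lambda>x. h (snd p x) (snd q x)) (fst p \<inter> fst q)) \<in> pfuns X E"
proof -
  obtain A f B g where p: "p = (A, f)" "A \<in> E" "continuous_map (subtopology X A) euclideanreal f"
    and q: "q = (B, g)" "B \<in> E" "continuous_map (subtopology X B) euclideanreal g"
    using assms(2,3) by (auto simp: pfuns_def)
  have "continuous_map (subtopology X (A \<inter> B)) euclideanreal f"
    "continuous_map (subtopology X (A \<inter> B)) euclideanreal g"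
    using p(3) q(3) continuous_map_from_subtopology_mono by blast+
  then have "continuous_map (subtopology X (A \<inter> B)) euclideanreal (\<lambda>x. h (f x) (g x))"
    by (rule h)
  then have "continuous_map (subtopology X (A \<inter> B)) euclideanreal
               (restrict (\<lambda>x. h (f x) (g x)) (A \<inter> B))"
    by (rule continuous_map_eq) auto
  moreover have "A \<inter> B \<in> E"
    using assms(1) p(2) q(2) by (simp add: admissible_domains_def)
  ultimately show ?thesis
    using p(1) q(1) by (simp add: pfuns_def)
qed

lemma pfuns_padd:
  "admissible_domains X E \<Longrightarrow> p \<in> pfuns X E \<Longrightarrow> q \<in> pfuns X E \<Longrightarrow> padd p q \<in> pfuns X E"
  unfolding padd_def by (rule pfuns_pointwise) (auto intro: continuous_map_add)

lemma pfuns_pmult: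
  "admissible_domains X E \<Longrightarrow> p \<in> pfuns X E \<Longrightarrow> q \<in> pfuns X E \<Longrightarrow> pmult p q \<in> pfuns X E"
  unfolding pmult_def by (rule pfuns_pointwise) (auto intro: continuous_map_real_mult)

lemma pfuns_pconst: "admissible_domains X E \<Longrightarrow> pconst X c \<in> pfuns X E"
  unfolding pfuns_def pconst_def admissible_domains_def
  by (auto intro: continuous_map_eq[OF continuous_map_const[THEN iffD2]])

lemma pclass_self: "admissible_domains X E \<Longrightarrow> p \<in> pfuns X E \<Longrightarrow> p \<in> pclass X E p"
  unfolding pclass_def by (rule equiv_class_self[OF equiv_paeq_rel])

lemma paeq_some_pclass:
  assumes "admissible_domains X E" "p \<in> pfuns X E"
  shows "(SOME p'. p' \<in> pclass X E p) \<in> pfuns X E \<and> paeq E (SOME p'. p' \<in> pclass X E p) p"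
  using someI[of "\<lambda>p'. p' \<in> pclass X E p", OF pclass_self[OF assms]]
  by (auto simp: pclass_def paeq_rel_def intro: paeq_sym)

lemma pclass_eqI:
  assumes "admissible_domains X E" "p \<in> pfuns X E" "q \<in> pfuns X E" "paeq E p q"
  shows "pclass X E p = pclass X E q"
  unfolding pclass_def
  by (rule equiv_class_eq[OF equiv_paeq_rel[OF assms(1)]]) (simp add: paeq_rel_def assms(2-4))

lemma cadd_pclass:
  assumes "admissible_domains X E" "p \<in> pfuns X E" "q \<in> pfuns X E"
  shows "cadd X E (pclass X E p) (pclass X E q) = pclass X E (padd p q)"
  using paeq_some_pclass[OF assms(1,2)] paeq_some_pclass[OF assms(1,3)] assms
  unfolding cadd_def
  by (intro pclass_eqI pfuns_padd) (auto simp: padd_def intro: paeq_pointwise)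

lemma cmult_pclass:
  assumes "admissible_domains X E" "p \<in> pfuns X E" "q \<in> pfuns X E"
  shows "cmult X E (pclass X E p) (pclass X E q) = pclass X E (pmult p q)"
  using paeq_some_pclass[OF assms(1,2)] paeq_some_pclass[OF assms(1,3)] assms
  unfolding cmult_def
  by (intro pclass_eqI pfuns_pmult) (auto simp: pmult_def intro: paeq_pointwise)

lemma carrier_Capprox: "carrier (Capprox X E) = pclass X E ` pfuns X E"
  by (auto simp: Capprox_def quotient_def pclass_def)

lemma pclass_in_cpos_iff:
  assumes "admissible_domains X E" "p \<in> pfuns X E"
  shows "pclass X E p \<in> cpos X E \<longleftrightarrow> ple E (pconst X 0) p"
proof
  assume "pclass X E p \<in> cpos X E"
  then obtain a b where "a \<in> pclass X E (pconst X 0)" "b \<in> pclass X E p" "ple E a b"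
    by (auto simp: cpos_def cle_def)
  then show "ple E (pconst X 0) p"
    using assms(1) by (auto simp: pclass_def paeq_rel_def intro: ple_paeq_trans paeq_sym)
next
  assume "ple E (pconst X 0) p"
  then show "pclass X E p \<in> cpos X E"
    using pclass_self[OF assms(1) pfuns_pconst[OF assms(1)]] pclass_self[OF assms]
    by (auto simp: cpos_def cle_def carrier_Capprox assms(2))
qed

lemma ple_pconst_zero_iff:
  "ple E (pconst X 0) p \<longleftrightarrow> (\<exists>C\<in>E. C \<subseteq> topspace X \<inter> fst p \<and> (\<forall>x\<in>C. 0 \<le> snd p x))"
  by (auto simp: ple_def pconst_def)

locale admissible_refinement =
  fixes X :: "'a topology" and E E' :: "'a set set"
  assumes admissible: "admissible_domains X E"
    and admissible': "admissible_domains X E'"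
    and subset: "E \<subseteq> E'"
begin

lemma iota_check_pclass:
  assumes p: "p \<in> pfuns X E"
  shows "iota_check X E' (pclass X E p) = pclass X E' p"
proof
  have "paeq_rel X E \<subseteq> paeq_rel X E'"
    using pfuns_mono[OF subset] paeq_mono[OF subset] unfolding paeq_rel_def by blast
  moreover have "trans (paeq_rel X E')"
    using equiv_paeq_rel[OF admissible'] by (rule equivE)
  ultimately show "iota_check X E' (pclass X E p) \<subseteq> pclass X E' p"
    unfolding iota_check_def pclass_def by (blast dest: transD)
  show "pclass X E' p \<subseteq> iota_check X E' (pclass X E p)"
    using pclass_self[OF admissible p] unfolding iota_check_def pclass_def by blast
qed

lemma iota_check_ring_hom: "iota_check X E' \<in> ring_hom (Capprox X E) (Capprox X E')"
proof (rule ring_hom_memI)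
  fix P Q assume "P \<in> carrier (Capprox X E)" "Q \<in> carrier (Capprox X E)"
  then obtain p q where pq: "p \<in> pfuns X E" "q \<in> pfuns X E"
    and PQ: "P = pclass X E p" "Q = pclass X E q"
    by (auto simp: carrier_Capprox)
  have pq': "p \<in> pfuns X E'" "q \<in> pfuns X E'"
    using pq pfuns_mono[OF subset] by auto
  show "iota_check X E' P \<in> carrier (Capprox X E')"
    using PQ pq pq' by (simp add: iota_check_pclass carrier_Capprox)
  show "iota_check X E' (P \<otimes>\<^bsub>Capprox X E\<^esub> Q)
          = iota_check X E' P \<otimes>\<^bsub>Capprox X E'\<^esub> iota_check X E' Q"
    using PQ pq pq' admissible admissible'
    by (simp add: Capprox_def cmult_pclass iota_check_pclass pfuns_pmult)
  show "iota_check X E' (P \<oplus>\<^bsub>Capprox X E\<^esub> Q)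
          = iota_check X E' P \<oplus>\<^bsub>Capprox X E'\<^esub> iota_check X E' Q"
    using PQ pq pq' admissible admissible'
    by (simp add: Capprox_def cadd_pclass iota_check_pclass pfuns_padd)
next
  show "iota_check X E' \<one>\<^bsub>Capprox X E\<^esub> = \<one>\<^bsub>Capprox X E'\<^esub>"
    using admissible by (simp add: Capprox_def iota_check_pclass pfuns_pconst)
qed

lemma iota_check_positive: "iota_check X E' ` cpos X E \<subseteq> cpos X E'"
proof
  fix Q assume "Q \<in> iota_check X E' ` cpos X E"
  then obtain p where p: "p \<in> pfuns X E" "pclass X E p \<in> cpos X E"
    and Q: "Q = pclass X E' p"
    by (auto simp: cpos_def carrier_Capprox iota_check_pclass)
  then have "ple E' (pconst X 0) p"
    using admissible pclass_in_cpos_iff ple_mono[OF subset] by blast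
  then show "Q \<in> cpos X E'"
    using pclass_in_cpos_iff[OF admissible'] p(1) pfuns_mono[OF subset] Q by blast
qed

end

lemma iota_check_reflects_positive:
  assumes E: "admissible_domains X E" "E \<subseteq> dense_opens X"
    and P: "P \<in> carrier (Capprox X E)" "iota_check X (dense_opens X) P \<in> cpos X (dense_opens X)"
  shows "P \<in> cpos X E"
proof -
  interpret admissible_refinement X E "dense_opens X"
    using E admissible_dense_opens by unfold_locales
  obtain p where p: "p \<in> pfuns X E" "P = pclass X E p"
    using P(1) by (auto simp: carrier_Capprox)
  have "p \<in> pfuns X (dense_opens X)"
    using p(1) pfuns_mono[OF subset] by blast
  moreover have "pclass X (dense_opens X) p \<in> cpos X (dense_opens X)"
    using P(2) iota_check_pclass[OF p(1)] p(2) by simp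
  ultimately have "ple (dense_opens X) (pconst X 0) p"
    using pclass_in_cpos_iff[OF admissible'] by blast
  then obtain C where C: "C \<in> dense_opens X" "C \<subseteq> fst p" "\<forall>x\<in>C. 0 \<le> snd p x"
    unfolding ple_pconst_zero_iff by blast
  have A: "openin X (fst p)" "fst p \<in> E"
    using E(1) pfuns_fst[OF p(1)] unfolding admissible_domains_def by blast+
  have "continuous_map (subtopology X (fst p)) euclideanreal (snd p)"
    using p(1) by (cases p) (simp add: pfuns_def)
  moreover have "X closure_of C = topspace X"
    using C(1) by (simp add: dense_opens_def)
  ultimately have "\<forall>x\<in>fst p. 0 \<le> snd p x"
    by (rule nonneg_on_open_if_nonneg_on_dense[OF _ A(1) _ C(2,3)])
  then have "ple E (pconst X 0) p"
    unfolding ple_pconst_zero_iff using A openin_subset[OF A(1)] by blast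
  then show ?thesis
    using pclass_in_cpos_iff[OF E(1) p(1)] p(2) by simp
qed

theorem proposition17:
  fixes X :: "'a topology" and D' :: "'a set set"
  assumes "admissible_domains X D'"
    and "D' \<subseteq> dense_opens X"
  shows "pfuns X D' \<subseteq> pfuns X (dense_opens X)
    \<and> (\<forall>p\<in>pfuns X D'. \<forall>q\<in>pfuns X D'. paeq D' p q \<longrightarrow> paeq (dense_opens X) p q)
    \<and> (\<forall>p\<in>pfuns X D'. iota_check X (dense_opens X) (pclass X D' p) = pclass X (dense_opens X) p)
    \<and> iota_check X (dense_opens X) \<in> ring_hom (Capprox X D') (Capprox X (dense_opens X))
    \<and> iota_check X (dense_opens X) ` cpos X D' \<subseteq> cpos X (dense_opens X)
    \<and> (\<forall>P\<in>carrier (Capprox X D').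
         iota_check X (dense_opens X) P \<in> cpos X (dense_opens X) \<longrightarrow> P \<in> cpos X D')"
proof -
  interpret admissible_refinement X D' "dense_opens X"
    using assms admissible_dense_opens by unfold_locales
  show ?thesis
    using pfuns_mono[OF subset] paeq_mono[OF subset] iota_check_pclass iota_check_ring_hom
      iota_check_positive iota_check_reflects_positive[OF assms]
    by blast
qed

end
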